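(* Let $G=(V,E)$ be a minimal hypergraph, let $V'\subseteq V$, and let $v\in V'$. Then $\mathcal{I}_v(G[V'])=(\mathcal{I}_v(G))[V']$, i.e. inverting at $v$ and taking the induced sub-hypergraph on $V'$ commute.
   Context: A simple hypergraph is a pair $G=(V,E)$ with $V$ a finite set and $E\subseteq 2^V$. For $e,f\in E$ with $e\subseteq f$, $e$ is a subedge of $f$; $f$ is minimal if its only subedge in $E$ is itself, and $G$ is a minimal hypergraph if every edge is minimal. $\mathrm{Min}(G)$ denotes the minimal hypergraph obtained from $G$ by deleting all non-minimal edges. For $V'\subseteq V$: the induced sub-hypergraph $G[V']$ is the hypergraph $(V', E\cap 2^{V'})$ (edges of $G$ contained in $V'$); the weak induced sub-hypergraph $G\langle V'\rangle$ is the (not necessarily minimal) hypergraph $(V',\{e\cap V' : e\in E\})$. The vertex inversion of $G$ at $v\in V$ is $\mathcal{I}_v(G)=\mathrm{Min}(G\langle V\setminus\{v\}\rangle)$. For a hypergraph $H$ whose vertex set does not contain $v$, $H[V']$ means the induced sub-hypergraph on $V'$ intersected with the vertex set of $H$. (Algebraically, $\mathcal{I}_x$ applied to the hypergraph of a squarefree monomial ideal $I$ gives the hypergraph of $I(x=1)$.) *)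

theory Defs
  imports Main
begin

type_synonym 'a hypergraph = "'a set \<times> 'a set set"

definition verts :: "'a hypergraph \<Rightarrow> 'a set" where "verts G = fst G"
definition edges :: "'a hypergraph \<Rightarrow> 'a set set" where "edges G = snd G"

definition simple_hypergraph :: "'a hypergraph \<Rightarrow> bool" where
  "simple_hypergraph G \<longleftrightarrow> finite (verts G) \<and> edges G \<subseteq> Pow (verts G)"

definition is_minimal_edge :: "'a hypergraph \<Rightarrow> 'a set \<Rightarrow> bool" where
  "is_minimal_edge G f \<longleftrightarrow> f \<in> edges G \<and> (\<forall>e\<in>edges G. e \<subseteq> f \<longrightarrow> e = f)"

definition minimal_hypergraph :: "'a hypergraph \<Rightarrow> bool" where
  "minimal_hypergraph G \<longleftrightarrow> simple_hypergraph G \<and> (\<forall>f\<in>edges G. is_minimal_edge G f)"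

definition Min_hg :: "'a hypergraph \<Rightarrow> 'a hypergraph" where
  "Min_hg G = (verts G, {f. is_minimal_edge G f})"

text \<open>Induced sub-hypergraph H[V']; the vertex set is V' intersected with the vertex set
  of H (this is G[V'] for V' \<subseteq> V, and the paper's convention for H with v not a vertex).\<close>
definition induced :: "'a hypergraph \<Rightarrow> 'a set \<Rightarrow> 'a hypergraph" where
  "induced H V' = (V' \<inter> verts H, edges H \<inter> Pow (V' \<inter> verts H))"

definition weak_induced :: "'a hypergraph \<Rightarrow> 'a set \<Rightarrow> 'a hypergraph" where
  "weak_induced G V' = (V', (\<lambda>e. e \<inter> V') ` edges G)"

definition vertex_inversion :: "'a \<Rightarrow> 'a hypergraph \<Rightarrow> 'a hypergraph" where
  "vertex_inversion v G = Min_hg (weak_induced G (verts G - {v}))"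

end

theory Submission
  imports Defs
begin

text \<open>Vertex inversion is deletion of \<open>v\<close> followed by \<open>Min\<close>, and both steps commute with
  taking induced sub-hypergraphs: a subedge of an edge inside \<open>V'\<close> lies inside \<open>V'\<close>, and for
  \<open>v \<in> V'\<close> we have \<open>e - {v} \<subseteq> V' - {v}\<close> iff \<open>e \<subseteq> V'\<close>.\<close>

lemma edges_induced: "edges (induced H W) = edges H \<inter> Pow (W \<inter> verts H)"
  by (simp add: induced_def edges_def)

lemma is_minimal_edge_induced_iff:
  "is_minimal_edge (induced H W) f \<longleftrightarrow> is_minimal_edge H f \<and> f \<subseteq> W \<inter> verts H"
  unfolding is_minimal_edge_def edges_induced by blast

lemma Min_hg_induced: "Min_hg (induced H W) = induced (Min_hg H) W"
proof -
  have "{f. is_minimal_edge (induced H W) f} = {f. is_minimal_edge H f} \<inter> Pow (W \<inter> verts H)"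
    by (auto simp only: is_minimal_edge_induced_iff)
  then show ?thesis
    by (simp add: Min_hg_def induced_def verts_def edges_def)
qed

lemma image_delete_restrict:
  assumes "v \<in> V'"
  shows "(\<lambda>e. e - {v}) ` (E \<inter> Pow V') = (\<lambda>e. e - {v}) ` E \<inter> Pow (V' - {v})"
  using assms by blast

lemma weak_induced_delete_vertex_induced:
  assumes "edges G \<subseteq> Pow (verts G)" and "v \<in> V' \<inter> verts G"
  shows "weak_induced (induced G V') (verts (induced G V') - {v})
           = induced (weak_induced G (verts G - {v})) V'"
proof -
  let ?V = "verts G" and ?E = "edges G"
  have "(\<lambda>e. e \<inter> (V' \<inter> ?V - {v})) ` (?E \<inter> Pow (V' \<inter> ?V)) = (\<lambda>e. e - {v}) ` (?E \<inter> Pow (V' \<inter> ?V))"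
    by (intro image_cong) auto
  also have "\<dots> = (\<lambda>e. e - {v}) ` ?E \<inter> Pow (V' \<inter> ?V - {v})"
    using assms(2) by (rule image_delete_restrict)
  also have "(\<lambda>e. e - {v}) ` ?E = (\<lambda>e. e \<inter> (?V - {v})) ` ?E"
    using assms(1) by (intro image_cong) auto
  finally show ?thesis
    by (simp add: weak_induced_def induced_def verts_def edges_def Int_Diff)
qed

theorem lemma2p9:
  fixes G :: "'a hypergraph" and V' :: "'a set" and v :: 'a
  assumes "minimal_hypergraph G"
    and "V' \<subseteq> verts G"
    and "v \<in> V'"
  shows "vertex_inversion v (induced G V') = induced (vertex_inversion v G) V'"
proof -
  have "edges G \<subseteq> Pow (verts G)"
    using assms(1) by (simp add: minimal_hypergraph_def simple_hypergraph_def)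
  moreover have "v \<in> V' \<inter> verts G"
    using assms(2,3) by blast
  ultimately show ?thesis
    unfolding vertex_inversion_def
    by (simp only: weak_induced_delete_vertex_induced Min_hg_induced)
qed

end
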